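(* There exists a constant $C_0>0$, independent of $P$, $T$ and $\Delta$ (it may depend on $\lambda_1,\lambda_2$), such that for all $P>0$, $\Delta>0$, $T\in\mathbb{N}$, the quantizer $q_r$ satisfies $$\mathbb{E}[r_{\rm loss}]\le \log_2\Big(1+C_0\,P\,\max\{e^{-T\Delta/\lambda_1},\Delta\}\Big).$$
   Context: $H_1,H_2$ are independent exponential random variables with means $\lambda_1\ge\lambda_2>0$ (density $e^{-x/\lambda_i}/\lambda_i$, $x>0$); $P>0$ is the total power. For $a\ge b\ge0$ with $a>0$ let $A(a,b)=\frac{2b}{\sqrt{(a+b)^2+4ab^2P}+a+b}$. Full-CSI maximum minimum rate: $r_{\max}=\log_2(1+PH_1A(H_1,H_2))$ if $H_1\ge H_2$ and $r_{\max}=\log_2(1+PH_2A(H_2,H_1))$ if $H_1<H_2$. Quantizer: $q_r(x)=\lfloor x/\Delta\rfloor\Delta$ for $x\le T\Delta$, $q_r(x)=T\Delta$ for $x>T\Delta$. Let $a_i=q_r(H_i)$; if $a_1\ge a_2$ let $(s,w)=(1,2)$, otherwise $(s,w)=(2,1)$. Power fraction for the stronger receiver's message: $\alpha_q=A(a_s,a_w)$ if $a_1,a_2>0$, else $\alpha_q=0$. Adapted rates: $r_{s,q}=\log_2(1+P\alpha_qa_s)$, $r_{w,q}=\log_2\big(1+\frac{Pa_w(1-\alpha_q)}{Pa_w\alpha_q+1}\big)$. Rate loss: $r_{\rm loss}=r_{\max}-\min\{r_{1,q},r_{2,q}\}$. *)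

theory Defs
  imports "HOL-Probability.Probability"
begin

definition exp_dens :: "real \<Rightarrow> real \<Rightarrow> real" where
  "exp_dens lam x = (if x > 0 then exp (- x / lam) / lam else 0)"

definition chan_law :: "real \<Rightarrow> real \<Rightarrow> (real \<times> real) measure" where
  "chan_law l1 l2 = density lborel (\<lambda>x. ennreal (exp_dens l1 x))
                     \<Otimes>\<^sub>M density lborel (\<lambda>x. ennreal (exp_dens l2 x))"

definition Afrac :: "real \<Rightarrow> real \<Rightarrow> real \<Rightarrow> real" where
  "Afrac P a b = 2 * b / (sqrt ((a + b)^2 + 4 * a * b^2 * P) + a + b)"

definition r_max :: "real \<Rightarrow> real \<Rightarrow> real \<Rightarrow> real" where
  "r_max P h1 h2 = (if h1 \<ge> h2 then log 2 (1 + P * h1 * Afrac P h1 h2)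
                    else log 2 (1 + P * h2 * Afrac P h2 h1))"

definition q_r :: "nat \<Rightarrow> real \<Rightarrow> real \<Rightarrow> real" where
  "q_r T \<Delta> x = (if x \<le> real T * \<Delta> then real_of_int \<lfloor>x / \<Delta>\<rfloor> * \<Delta> else real T * \<Delta>)"

definition rates_q :: "real \<Rightarrow> nat \<Rightarrow> real \<Rightarrow> real \<Rightarrow> real \<Rightarrow> real \<times> real" where
  "rates_q P T \<Delta> h1 h2 =
     (let a1 = q_r T \<Delta> h1; a2 = q_r T \<Delta> h2;
          as = (if a1 \<ge> a2 then a1 else a2);
          aw = (if a1 \<ge> a2 then a2 else a1);
          \<alpha> = (if a1 > 0 \<and> a2 > 0 then Afrac P as aw else 0);
          rs = log 2 (1 + P * \<alpha> * as);
          rw = log 2 (1 + P * aw * (1 - \<alpha>) / (P * aw * \<alpha> + 1))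
      in if a1 \<ge> a2 then (rs, rw) else (rw, rs))"

definition r_loss :: "real \<Rightarrow> nat \<Rightarrow> real \<Rightarrow> real \<Rightarrow> real \<Rightarrow> real" where
  "r_loss P T \<Delta> h1 h2 = r_max P h1 h2 - min (fst (rates_q P T \<Delta> h1 h2)) (snd (rates_q P T \<Delta> h1 h2))"

end

theory Submission
  imports Defs
begin

text \<open>
  With the rate-balancing power split both receivers see the same SNR \<open>Y(a,b) = P a A(a,b)\<close>,
  the nonnegative root of \<open>y(y+1)/a + y/b = P\<close>; so \<open>r\<^sub>m\<^sub>a\<^sub>x = log\<^sub>2(1 + Y(h\<^sub>s,h\<^sub>w))\<close> and both
  adapted rates equal \<open>log\<^sub>2(1 + Y(a\<^sub>s,a\<^sub>w))\<close>. This characterisation shows that \<open>Y\<close> is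
  \<open>P\<close>-Lipschitz in each gain and bounded by \<open>P b\<close>. Hence the loss is always at most
  \<open>log\<^sub>2(1 + P min(h\<^sub>1,h\<^sub>2))\<close>, and at most \<open>log\<^sub>2(1 + 2P\<Delta>)\<close> when both gains lie in \<open>[\<Delta>, T\<Delta>]\<close>.
  So the loss is bounded by \<open>log\<^sub>2(1 + P g)\<close> for a majorant \<open>g\<close> of mean
  \<open>2\<Delta> + \<lambda>\<^sub>2 exp(-T\<Delta>/\<lambda>\<^sub>1) + \<lambda>\<^sub>1 exp(-T\<Delta>/\<lambda>\<^sub>2) \<le> (2 + 2\<lambda>\<^sub>1) max(exp(-T\<Delta>/\<lambda>\<^sub>1), \<Delta>)\<close>,
  and Jensen's inequality for the concave function \<open>log\<^sub>2(1 + \<cdot>)\<close> finishes the proof.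
\<close>

subsection \<open>The balanced SNR\<close>

definition balanced_snr :: "real \<Rightarrow> real \<Rightarrow> real \<Rightarrow> real" where
  "balanced_snr P a b = P * a * Afrac P a b"

lemma balanced_snr_equation:
  assumes P: "P > 0" and a: "a > 0" and b: "b > 0"
  defines "y \<equiv> balanced_snr P a b"
  shows "y \<ge> 0" and "y * (y + 1) / a + y / b = P"
proof -
  define S where "S = sqrt ((a + b)^2 + 4 * a * b^2 * P)"
  have S2: "S^2 = (a + b)^2 + 4 * a * b^2 * P"
    unfolding S_def using a b P by (simp add: zero_le_mult_iff)
  have S_ge: "S \<ge> a + b"
    unfolding S_def using a b P by (intro real_le_rsqrt) (simp add: zero_le_mult_iff)
  have "y * (S + a + b) = P * a * (2 * b)"
    using S_ge a b unfolding y_def balanced_snr_def Afrac_def S_def[symmetric] by (simp add: field_simps)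
  then have "(y * (2 * b)) * (S + a + b) = P * a * (2 * b) * (2 * b)"
    by (metis mult.assoc mult.commute)
  also have "\<dots> = (S - a - b) * (S + a + b)"
    using S2 by (simp add: algebra_simps power2_eq_square)
  finally have "(y * (2 * b)) * (S + a + b) = (S - a - b) * (S + a + b)" .
  then have "y * (2 * b) = S - a - b"
    using S_ge a b mult_right_cancel[of "S + a + b" "y * (2 * b)" "S - a - b"] by simp
  then have y: "y = (S - a - b) / (2 * b)"
    using b by (simp add: field_simps)
  then show "y \<ge> 0" using S_ge b by simp
  have "(2 * b * y + a + b)^2 = (a + b)^2 + 4 * a * b^2 * P"
    using y b S2 by (simp add: field_simps)
  then have "4 * b * (y * (y + 1) * b + y * a) = 4 * b * (P * a * b)"
    by (simp add: algebra_simps power2_eq_square)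
  then have "y * (y + 1) * b + y * a = P * a * b" using b by simp
  then show "y * (y + 1) / a + y / b = P" using a b by (simp add: field_simps)
qed

lemma balanced_snr_le_if:
  assumes P: "P > 0" and a: "a > 0" and b: "b > 0" and w: "w \<ge> 0"
    and le: "P \<le> w * (w + 1) / a + w / b"
  shows "balanced_snr P a b \<le> w"
proof (rule ccontr)
  define y where "y = balanced_snr P a b"
  assume "\<not> balanced_snr P a b \<le> w"
  then have "w < y" by (simp add: y_def)
  then have "w * (w + 1) / a < y * (y + 1) / a" and "w / b < y / b"
    using w a b by (auto intro!: divide_strict_right_mono mult_strict_mono)
  then show False using le balanced_snr_equation[OF P a b] by (simp add: y_def)
qed

lemma balanced_snr_le:
  assumes "P > 0" "a > 0" "b > 0"
  shows "balanced_snr P a b \<le> P * b"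
proof -
  define y where "y = balanced_snr P a b"
  have "y \<ge> 0" "y * (y + 1) / a + y / b = P"
    using balanced_snr_equation[OF assms] by (simp_all add: y_def)
  moreover have "0 \<le> y * (y + 1) / a" using \<open>y \<ge> 0\<close> assms by simp
  ultimately have "y / b \<le> P" by linarith
  then show ?thesis using assms by (simp add: y_def divide_le_eq mult.commute)
qed

lemma balanced_snr_lipschitz_fst:
  assumes P: "P > 0" and a': "a' > 0" and "a' \<le> a" and b: "b > 0"
  shows "balanced_snr P a b \<le> balanced_snr P a' b + P * (a - a')"
proof -
  define v where "v = balanced_snr P a' b"
  define w where "w = v + P * (a - a')"
  have a: "a > 0" using a' \<open>a' \<le> a\<close> by simp
  have v: "v \<ge> 0" "v * (v + 1) / a' + v / b = P"
    using balanced_snr_equation[OF P a' b] by (simp_all add: v_def)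
  have "0 \<le> v / b" using v b by simp
  then have v_le: "v * (v + 1) / a' \<le> P" using v by linarith
  have "w * (w + 1) = v * (v + 1) + P * (a - a') * (2 * v) + P * (a - a') + (P * (a - a'))^2"
    unfolding w_def by (simp add: algebra_simps power2_eq_square)
  moreover have "0 \<le> P * (a - a') * (2 * v)" using v P \<open>a' \<le> a\<close> by simp
  ultimately have "w * (w + 1) \<ge> v * (v + 1) + P * (a - a')" by simp
  then have "w * (w + 1) / a \<ge> (v * (v + 1) + P * (a - a')) / a"
    using a by (simp add: divide_right_mono)
  moreover have "v * (v + 1) / a' = v * (v + 1) / a + v * (v + 1) * (a - a') / (a * a')"
    using a a' by (simp add: field_simps)
  moreover have "v * (v + 1) * (a - a') / (a * a') \<le> P * (a - a') / a"
  proof -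
    have "v * (v + 1) * (a - a') / (a * a') = (v * (v + 1) / a') * ((a - a') / a)" by simp
    also have "\<dots> \<le> P * ((a - a') / a)" using v_le \<open>a' \<le> a\<close> a by (intro mult_right_mono) auto
    finally show ?thesis by simp
  qed
  moreover have "w / b \<ge> v / b" using P \<open>a' \<le> a\<close> b by (simp add: w_def divide_right_mono)
  ultimately have "P \<le> w * (w + 1) / a + w / b"
    using v(2) by (simp add: add_divide_distrib)
  then show ?thesis
    using balanced_snr_le_if[OF P a b] v P \<open>a' \<le> a\<close> by (simp add: w_def v_def)
qed

lemma balanced_snr_lipschitz_snd:
  assumes P: "P > 0" and a: "a > 0" and b': "b' > 0" and "b' \<le> b"
  shows "balanced_snr P a b \<le> balanced_snr P a b' + P * (b - b')"
proof -
  define v where "v = balanced_snr P a b'"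
  define w where "w = v + P * (b - b')"
  have b: "b > 0" using b' \<open>b' \<le> b\<close> by simp
  have v: "v \<ge> 0" "v * (v + 1) / a + v / b' = P"
    using balanced_snr_equation[OF P a b'] by (simp_all add: v_def)
  have "0 \<le> v * (v + 1) / a" using v a by simp
  then have v_le: "v / b' \<le> P" using v by linarith
  have "w * (w + 1) \<ge> v * (v + 1)"
    unfolding w_def using v P \<open>b' \<le> b\<close> by (intro mult_mono) auto
  then have "w * (w + 1) / a \<ge> v * (v + 1) / a" using a by (simp add: divide_right_mono)
  have "v / b' = v / b + v * (b - b') / (b * b')"
    using b b' by (simp add: field_simps)
  moreover have "v * (b - b') / (b * b') \<le> P * (b - b') / b"
  proof -
    have "v * (b - b') / (b * b') = (v / b') * ((b - b') / b)" by simp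
    also have "\<dots> \<le> P * ((b - b') / b)" using v_le \<open>b' \<le> b\<close> b by (intro mult_right_mono) auto
    finally show ?thesis by simp
  qed
  ultimately have "w / b \<ge> v / b'" unfolding w_def by (simp add: add_divide_distrib)
  then have "P \<le> w * (w + 1) / a + w / b" using v(2) \<open>w * (w + 1) / a \<ge> v * (v + 1) / a\<close> by simp
  then show ?thesis
    using balanced_snr_le_if[OF P a b] v P \<open>b' \<le> b\<close> by (simp add: w_def v_def)
qed

lemma weak_sinr_eq_balanced_snr:
  assumes P: "P > 0" and a: "a > 0" and b: "b > 0"
  shows "P * b * (1 - Afrac P a b) / (P * b * Afrac P a b + 1) = balanced_snr P a b"
proof -
  define y where "y = balanced_snr P a b"
  have y: "y \<ge> 0" "y * (y + 1) / a + y / b = P"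
    using balanced_snr_equation[OF P a b] by (simp_all add: y_def)
  have A: "Afrac P a b = y / (P * a)" using P a by (simp add: y_def balanced_snr_def)
  have "P * a * b = y * (y + 1) * b + y * a" using y a b by (simp add: field_simps)
  then have "P * b * (1 - y / (P * a)) = y * (P * b * (y / (P * a)) + 1)"
    using P a b by (simp add: field_simps)
  moreover have "P * b * (y / (P * a)) + 1 > 0" using P a b y by (simp add: add_nonneg_pos)
  ultimately show ?thesis by (simp add: A y_def)
qed

lemma q_r_nonneg: "\<Delta> > 0 \<Longrightarrow> h > 0 \<Longrightarrow> q_r T \<Delta> h \<ge> 0"
  unfolding q_r_def by auto

lemma q_r_le: "\<Delta> > 0 \<Longrightarrow> h > 0 \<Longrightarrow> q_r T \<Delta> h \<le> h"
  unfolding q_r_def using floor_divide_lower[of \<Delta> h] by auto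

lemma q_r_mono:
  assumes "\<Delta> > 0" "h' \<le> h"
  shows "q_r T \<Delta> h' \<le> q_r T \<Delta> h"
proof -
  have "real_of_int \<lfloor>h' / \<Delta>\<rfloor> \<le> real_of_int \<lfloor>h / \<Delta>\<rfloor>"
    using assms by (simp only: of_int_le_iff, intro floor_mono divide_right_mono) auto
  moreover have "real_of_int \<lfloor>h' / \<Delta>\<rfloor> * \<Delta> \<le> h'"
    using floor_divide_lower[of \<Delta> h'] assms by simp
  moreover have "real_of_int \<lfloor>h' / \<Delta>\<rfloor> \<le> real T" if "h' \<le> real T * \<Delta>"
  proof -
    have "h' / \<Delta> \<le> real T" using that assms by (simp add: divide_le_eq)
    then show ?thesis by linarith
  qed
  ultimately show ?thesis unfolding q_r_def using assms by (auto intro: mult_right_mono)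
qed

lemma q_r_in_range:
  assumes "\<Delta> > 0" "\<Delta> \<le> h" "h \<le> real T * \<Delta>"
  shows "q_r T \<Delta> h > 0" and "h - q_r T \<Delta> h < \<Delta>"
proof -
  have "\<lfloor>h / \<Delta>\<rfloor> \<ge> 1" using assms by (simp add: le_floor_iff)
  moreover have "h < (real_of_int \<lfloor>h / \<Delta>\<rfloor> + 1) * \<Delta>"
    using floor_divide_upper[of \<Delta> h] assms by simp
  ultimately show "q_r T \<Delta> h > 0" "h - q_r T \<Delta> h < \<Delta>"
    unfolding q_r_def using assms by (auto simp: algebra_simps)
qed

subsection \<open>Pointwise bounds on the rate loss\<close>

lemma r_loss_sym: "r_loss P T \<Delta> h1 h2 = r_loss P T \<Delta> h2 h1"
proof -
  have "r_max P h1 h2 = r_max P h2 h1" unfolding r_max_def by auto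
  moreover have "min (fst (rates_q P T \<Delta> h1 h2)) (snd (rates_q P T \<Delta> h1 h2)) =
      min (fst (rates_q P T \<Delta> h2 h1)) (snd (rates_q P T \<Delta> h2 h1))"
    unfolding rates_q_def Let_def
    by (cases "q_r T \<Delta> h1 < q_r T \<Delta> h2"; cases "q_r T \<Delta> h2 < q_r T \<Delta> h1")
      (auto simp: min.commute)
  ultimately show ?thesis unfolding r_loss_def by simp
qed

lemma r_loss_eq:
  fixes T :: nat
  assumes P: "P > 0" and \<Delta>: "\<Delta> > 0" and "h2 > 0" "h2 \<le> h1"
  defines "a1 \<equiv> q_r T \<Delta> h1" and "a2 \<equiv> q_r T \<Delta> h2"
  shows "r_loss P T \<Delta> h1 h2 = log 2 (1 + balanced_snr P h1 h2) -
    (if a2 > 0 then log 2 (1 + balanced_snr P a1 a2) else 0)"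
proof -
  have a12: "a2 \<le> a1" using q_r_mono[OF \<Delta> \<open>h2 \<le> h1\<close>] by (simp add: a1_def a2_def)
  have a2: "a2 \<ge> 0" using q_r_nonneg[OF \<Delta> \<open>h2 > 0\<close>] by (simp add: a2_def)
  have r_max: "r_max P h1 h2 = log 2 (1 + balanced_snr P h1 h2)"
    using \<open>h2 \<le> h1\<close> by (simp add: r_max_def balanced_snr_def)
  show ?thesis
  proof (cases "a2 > 0")
    case True
    then have "a1 > 0" using a12 by simp
    then have "rates_q P T \<Delta> h1 h2 =
        (log 2 (1 + balanced_snr P a1 a2), log 2 (1 + balanced_snr P a1 a2))"
      using a12 True weak_sinr_eq_balanced_snr[OF P _ True, of a1]
      unfolding rates_q_def Let_def a1_def[symmetric] a2_def[symmetric]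
      by (simp add: balanced_snr_def algebra_simps)
    then show ?thesis using True by (simp add: r_loss_def r_max)
  next
    case False
    then have "rates_q P T \<Delta> h1 h2 = (0, 0)"
      using a12 a2 unfolding rates_q_def Let_def a1_def[symmetric] a2_def[symmetric] by simp
    then show ?thesis using False by (simp add: r_loss_def r_max)
  qed
qed

lemma abs_r_loss_le_ordered:
  assumes P: "P > 0" and \<Delta>: "\<Delta> > 0" and h2: "h2 > 0" and "h2 \<le> h1"
  shows "\<bar>r_loss P T \<Delta> h1 h2\<bar> \<le> log 2 (1 + P * h2)"
proof -
  define a1 where "a1 = q_r T \<Delta> h1"
  define a2 where "a2 = q_r T \<Delta> h2"
  have h1: "h1 > 0" using h2 \<open>h2 \<le> h1\<close> by simp
  have "0 \<le> balanced_snr P h1 h2" "balanced_snr P h1 h2 \<le> P * h2"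
    using balanced_snr_equation[OF P h1 h2] balanced_snr_le[OF P h1 h2] by auto
  then have full: "0 \<le> log 2 (1 + balanced_snr P h1 h2)"
    "log 2 (1 + balanced_snr P h1 h2) \<le> log 2 (1 + P * h2)" by auto
  have "0 \<le> log 2 (1 + balanced_snr P a1 a2) \<and>
      log 2 (1 + balanced_snr P a1 a2) \<le> log 2 (1 + P * h2)" if a2: "a2 > 0"
  proof -
    have a1: "a1 > 0" using a2 q_r_mono[OF \<Delta> \<open>h2 \<le> h1\<close>, of T] by (simp add: a1_def a2_def)
    have "a2 \<le> h2" using q_r_le[OF \<Delta> h2] by (simp add: a2_def)
    then have "balanced_snr P a1 a2 \<le> P * h2"
      using balanced_snr_le[OF P a1 a2] P by (meson order.trans mult_left_mono less_imp_le)
    then show ?thesis using balanced_snr_equation(1)[OF P a1 a2] by auto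
  qed
  then show ?thesis
    using r_loss_eq[OF P \<Delta> h2 \<open>h2 \<le> h1\<close>, of T] full by (auto simp: a1_def a2_def)
qed

lemma log2_one_plus_le_add:
  fixes x y d :: real
  assumes "0 \<le> x" "0 \<le> y" "0 \<le> d" "x \<le> y + d"
  shows "log 2 (1 + x) \<le> log 2 (1 + y) + log 2 (1 + d)"
proof -
  have "(1 + y) * (1 + d) = 1 + (y + d) + y * d" by (simp add: algebra_simps)
  moreover have "0 \<le> y * d" using assms by simp
  ultimately have "1 + x \<le> (1 + y) * (1 + d)" using assms by linarith
  then have "log 2 (1 + x) \<le> log 2 ((1 + y) * (1 + d))" using assms by simp
  then show ?thesis using assms by (simp add: log_mult)
qed

text \<open>Both gains are quantized with error below \<open>\<Delta>\<close>, and the balanced SNR is \<open>P\<close>-Lipschitz.\<close>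

lemma r_loss_le_in_range:
  assumes P: "P > 0" and \<Delta>: "\<Delta> > 0" and "\<Delta> \<le> h2" "h2 \<le> h1" "h1 \<le> real T * \<Delta>"
  shows "r_loss P T \<Delta> h1 h2 \<le> log 2 (1 + 2 * P * \<Delta>)"
proof -
  define a1 where "a1 = q_r T \<Delta> h1"
  define a2 where "a2 = q_r T \<Delta> h2"
  have a1: "a1 > 0" "h1 - a1 < \<Delta>" "a1 \<le> h1"
    using q_r_in_range[OF \<Delta>, of h1 T] q_r_le[OF \<Delta>, of h1 T] assms by (auto simp: a1_def)
  have a2: "a2 > 0" "h2 - a2 < \<Delta>" "a2 \<le> h2"
    using q_r_in_range[OF \<Delta>, of h2 T] q_r_le[OF \<Delta>, of h2 T] assms by (auto simp: a2_def)
  have h2: "h2 > 0" using assms by simp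
  have h1: "h1 > 0" using assms by simp
  have "balanced_snr P h1 h2 \<le> balanced_snr P a1 h2 + P * (h1 - a1)"
    using balanced_snr_lipschitz_fst[OF P a1(1) a1(3) h2] .
  moreover have "balanced_snr P a1 h2 \<le> balanced_snr P a1 a2 + P * (h2 - a2)"
    using balanced_snr_lipschitz_snd[OF P a1(1) a2(1) a2(3)] .
  moreover have "P * (h1 - a1) \<le> P * \<Delta>" "P * (h2 - a2) \<le> P * \<Delta>"
    using a1 a2 P by auto
  ultimately have "balanced_snr P h1 h2 \<le> balanced_snr P a1 a2 + 2 * P * \<Delta>" by linarith
  moreover have "0 \<le> balanced_snr P h1 h2" "0 \<le> balanced_snr P a1 a2" "0 \<le> 2 * P * \<Delta>"
    using balanced_snr_equation(1)[OF P h1 h2] balanced_snr_equation(1)[OF P a1(1) a2(1)] P \<Delta>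
    by auto
  ultimately have "log 2 (1 + balanced_snr P h1 h2) \<le>
      log 2 (1 + balanced_snr P a1 a2) + log 2 (1 + 2 * P * \<Delta>)"
    by (intro log2_one_plus_le_add)
  then show ?thesis
    using r_loss_eq[OF P \<Delta> h2 \<open>h2 \<le> h1\<close>, of T] a2(1) by (simp add: a1_def a2_def)
qed

text \<open>
  The majorant charges \<open>2\<Delta>\<close> for quantization error and the smaller gain when the larger one
  overflows the quantizer range; the absolute values make it nonnegative everywhere.
\<close>

definition loss_majorant :: "nat \<Rightarrow> real \<Rightarrow> real \<Rightarrow> real \<Rightarrow> real" where
  "loss_majorant T \<Delta> h1 h2 = 2 * \<Delta> + indicator {real T * \<Delta><..} h1 * \<bar>h2\<bar>
     + \<bar>h1\<bar> * indicator {real T * \<Delta><..} h2"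

lemma r_loss_le_majorant_ordered:
  assumes P: "P > 0" and \<Delta>: "\<Delta> > 0" and h2: "h2 > 0" and "h2 \<le> h1"
  shows "r_loss P T \<Delta> h1 h2 \<le> log 2 (1 + P * loss_majorant T \<Delta> h1 h2)"
proof -
  have two_\<Delta>: "2 * \<Delta> \<le> loss_majorant T \<Delta> h1 h2"
    by (simp add: loss_majorant_def indicator_def)
  show ?thesis
  proof (cases "real T * \<Delta> < h1 \<or> h2 < \<Delta>")
    case True
    then have "0 \<le> P * h2" "P * h2 \<le> P * loss_majorant T \<Delta> h1 h2"
      using P h2 \<Delta> two_\<Delta> by (auto simp: loss_majorant_def indicator_def intro!: mult_left_mono)
    then have "log 2 (1 + P * h2) \<le> log 2 (1 + P * loss_majorant T \<Delta> h1 h2)" by simp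
    then show ?thesis
      using abs_r_loss_le_ordered[OF P \<Delta> h2 \<open>h2 \<le> h1\<close>, of T] by linarith
  next
    case False
    have "0 \<le> 2 * P * \<Delta>" "2 * P * \<Delta> \<le> P * loss_majorant T \<Delta> h1 h2"
      using two_\<Delta> P \<Delta> by (simp_all add: mult.assoc mult_left_mono)
    then have "log 2 (1 + 2 * P * \<Delta>) \<le> log 2 (1 + P * loss_majorant T \<Delta> h1 h2)" by simp
    then show ?thesis using r_loss_le_in_range[OF P \<Delta> _ \<open>h2 \<le> h1\<close>, of T] False by simp
  qed
qed

lemma r_loss_bounds:
  assumes P: "P > 0" and \<Delta>: "\<Delta> > 0" and "h1 > 0" "h2 > 0"
  shows "\<bar>r_loss P T \<Delta> h1 h2\<bar> \<le> P * (h1 + h2) / ln 2"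
    and "r_loss P T \<Delta> h1 h2 \<le> log 2 (1 + P * loss_majorant T \<Delta> h1 h2)"
proof -
  have majorant_sym: "loss_majorant T \<Delta> h1 h2 = loss_majorant T \<Delta> h2 h1"
    by (simp add: loss_majorant_def)
  have "\<bar>r_loss P T \<Delta> h1 h2\<bar> \<le> log 2 (1 + P * min h1 h2)"
    using abs_r_loss_le_ordered[OF P \<Delta>, of h2 h1 T] abs_r_loss_le_ordered[OF P \<Delta>, of h1 h2 T]
      r_loss_sym[of P T \<Delta> h1 h2] assms by (cases "h2 \<le> h1") (auto simp: min_def)
  also have "\<dots> = ln (1 + P * min h1 h2) / ln 2" by (simp add: log_def)
  also have "\<dots> \<le> P * (h1 + h2) / ln 2"
    using assms by (intro divide_right_mono order.trans[OF ln_add_one_self_le_self]) auto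
  finally show "\<bar>r_loss P T \<Delta> h1 h2\<bar> \<le> P * (h1 + h2) / ln 2" .
  show "r_loss P T \<Delta> h1 h2 \<le> log 2 (1 + P * loss_majorant T \<Delta> h1 h2)"
    using r_loss_le_majorant_ordered[OF P \<Delta>, of h2 h1 T] r_loss_le_majorant_ordered[OF P \<Delta>, of h1 h2 T]
      r_loss_sym[of P T \<Delta> h1 h2] majorant_sym assms by (cases "h2 \<le> h1") auto
qed

subsection \<open>Jensen's inequality for \<open>log\<^sub>2(1 + \<cdot>)\<close>\<close>

lemma log2_one_plus_le_tangent:
  fixes z m :: real
  assumes "z \<ge> 0" "m \<ge> 0"
  shows "log 2 (1 + z) \<le> log 2 (1 + m) + (z - m) / ((1 + m) * ln 2)"
proof -
  have "ln ((1 + z) / (1 + m)) \<le> (1 + z) / (1 + m) - 1"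
    using assms by (intro ln_le_minus_one) auto
  moreover have "ln ((1 + z) / (1 + m)) = ln (1 + z) - ln (1 + m)"
    using assms by (simp add: ln_div)
  moreover have "(1 + z) / (1 + m) - 1 = (z - m) / (1 + m)"
    using assms by (simp add: field_simps)
  ultimately have "ln (1 + z) / ln 2 \<le> (ln (1 + m) + (z - m) / (1 + m)) / ln 2"
    by (intro divide_right_mono) auto
  then show ?thesis by (simp add: log_def add_divide_distrib)
qed

lemma (in prob_space) integral_le_log2_one_plus_integral:
  fixes f g :: "'a \<Rightarrow> real"
  assumes f: "integrable M f" and g: "integrable M g"
    and le: "AE x in M. 0 \<le> g x \<and> f x \<le> log 2 (1 + g x)"
  shows "integral\<^sup>L M f \<le> log 2 (1 + integral\<^sup>L M g)"
proof -
  define m where "m = integral\<^sup>L M g"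
  define k where "k = 1 / ((1 + m) * ln 2)"
  have m: "m \<ge> 0" unfolding m_def using le by (intro integral_nonneg_AE) auto
  have "AE x in M. f x \<le> log 2 (1 + m) + k * (g x - m)"
    using le
  proof eventually_elim
    case (elim x)
    then show ?case using log2_one_plus_le_tangent[of "g x" m] m by (simp add: k_def)
  qed
  then have "integral\<^sup>L M f \<le> (\<integral>x. log 2 (1 + m) + k * (g x - m) \<partial>M)"
    using f g by (intro integral_mono_AE) auto
  also have "\<dots> = log 2 (1 + m)"
    using g by (simp add: m_def prob_space)
  finally show ?thesis by (simp add: m_def)
qed

subsection \<open>The channel law\<close>

abbreviation exp_law :: "real \<Rightarrow> real measure" where
  "exp_law l \<equiv> density lborel (\<lambda>x. ennreal (exp_dens l x))"

lemma exp_law_eq_exponential_density: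
  assumes "l > 0"
  shows "exp_law l = density lborel (exponential_density (1 / l))"
proof (rule density_cong)
  show "AE x in lborel. ennreal (exp_dens l x) = ennreal (exponential_density (1 / l) x)"
    using AE_lborel_singleton[of "0::real"]
    by eventually_elim (auto simp: exp_dens_def exponential_density_def)
qed (auto simp: exp_dens_def)

lemma prob_space_exp_law: "l > 0 \<Longrightarrow> prob_space (exp_law l)"
  using exp_law_eq_exponential_density prob_space_exponential_density[of "1 / l"] by simp

lemma nn_integral_exp_law_abs:
  assumes l: "l > 0"
  shows "(\<integral>\<^sup>+x. ennreal \<bar>x\<bar> \<partial>exp_law l) = ennreal l"
proof -
  have "(\<integral>\<^sup>+x. ennreal \<bar>x\<bar> \<partial>exp_law l) =
      (\<integral>\<^sup>+x. ennreal (exponential_density (1 / l) x) * ennreal \<bar>x\<bar> \<partial>lborel)"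
    by (simp add: exp_law_eq_exponential_density[OF l] nn_integral_density)
  also have "\<dots> = (\<integral>\<^sup>+x. ennreal (erlang_density 0 (1 / l) x * x ^ 1) \<partial>lborel)"
    using l by (intro nn_integral_cong)
      (auto simp: exponential_density_def ennreal_mult'[symmetric] mult.commute)
  also have "\<dots> = ennreal l"
    using l by (subst nn_integral_erlang_ith_moment) auto
  finally show ?thesis .
qed

lemma emeasure_exp_law_greaterThan:
  assumes l: "l > 0" and t: "t \<ge> 0"
  shows "emeasure (exp_law l) {t<..} = ennreal (exp (- t / l))"
proof -
  interpret prob_space "exp_law l" using prob_space_exp_law[OF l] .
  have "emeasure (exp_law l) {..t} = ennreal (erlang_CDF 0 (1 / l) t)"
    using exp_law_eq_exponential_density[OF l] emeasure_erlang_density[of "1 / l" 0 t] l by simp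
  then have "prob {..t} = 1 - exp (- t / l)"
    using l t by (simp add: emeasure_eq_measure erlang_CDF_nonneg erlang_CDF_0)
  moreover have "prob {t<..} = 1 - prob {..t}"
    using prob_compl[of "{..t}"] by (simp add: Compl_eq_Diff_UNIV[symmetric] Compl_atMost)
  ultimately show ?thesis by (simp add: emeasure_eq_measure)
qed

lemma AE_exp_law_pos: "AE x in exp_law l. x > 0"
  by (subst AE_density) (auto simp: exp_dens_def)

lemma sets_chan_law: "sets (chan_law l1 l2) = sets (borel \<Otimes>\<^sub>M borel)"
  unfolding chan_law_def by (intro sets_pair_measure_cong) auto

lemma measurable_chan_law:
  "f \<in> borel_measurable (borel \<Otimes>\<^sub>M borel) \<Longrightarrow> f \<in> borel_measurable (chan_law l1 l2)"
  using measurable_cong_sets[OF sets_chan_law refl] by blast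

lemma prob_space_chan_law: "l1 > 0 \<Longrightarrow> l2 > 0 \<Longrightarrow> prob_space (chan_law l1 l2)"
  unfolding chan_law_def by (intro prob_space_pair prob_space_exp_law)

lemma AE_chan_law_pos:
  assumes l1: "l1 > 0" and l2: "l2 > 0"
  shows "AE z in chan_law l1 l2. fst z > 0 \<and> snd z > 0"
proof -
  interpret p1: prob_space "exp_law l1" using prob_space_exp_law[OF l1] .
  interpret p2: prob_space "exp_law l2" using prob_space_exp_law[OF l2] .
  interpret pair_prob_space "exp_law l1" "exp_law l2" ..
  have "{z \<in> space (exp_law l1 \<Otimes>\<^sub>M exp_law l2). 0 < fst z \<and> 0 < snd z} = {0<..} \<times> {0<..}"
    by (auto simp: space_pair_measure)
  moreover have "AE x in exp_law l1. AE y in exp_law l2. 0 < x \<and> 0 < y"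
    using AE_exp_law_pos[of l1] AE_exp_law_pos[of l2] by (auto elim: AE_mp)
  ultimately show ?thesis
    unfolding chan_law_def by (intro AE_pair_measure) (auto intro: pair_measureI)
qed

lemma nn_integral_chan_law_product:
  assumes l1: "l1 > 0" and l2: "l2 > 0"
    and [measurable]: "f \<in> borel_measurable borel" "g \<in> borel_measurable borel"
  shows "(\<integral>\<^sup>+z. f (fst z) * g (snd z) \<partial>chan_law l1 l2) =
    (\<integral>\<^sup>+x. f x \<partial>exp_law l1) * (\<integral>\<^sup>+y. g y \<partial>exp_law l2)"
proof -
  interpret prob_space "exp_law l2" using prob_space_exp_law[OF l2] .
  have "(\<lambda>z. f (fst z) * g (snd z)) \<in> borel_measurable (exp_law l1 \<Otimes>\<^sub>M exp_law l2)"
    using measurable_chan_law[of "\<lambda>z. f (fst z) * g (snd z)" l1 l2] by (simp add: chan_law_def)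
  then have "(\<integral>\<^sup>+z. f (fst z) * g (snd z) \<partial>chan_law l1 l2) =
      (\<integral>\<^sup>+x. \<integral>\<^sup>+y. f x * g y \<partial>exp_law l2 \<partial>exp_law l1)"
    unfolding chan_law_def by (simp add: nn_integral_fst[symmetric])
  also have "\<dots> = (\<integral>\<^sup>+x. f x * (\<integral>\<^sup>+y. g y \<partial>exp_law l2) \<partial>exp_law l1)"
    by (intro nn_integral_cong nn_integral_cmult) auto
  also have "\<dots> = (\<integral>\<^sup>+x. f x \<partial>exp_law l1) * (\<integral>\<^sup>+y. g y \<partial>exp_law l2)"
    by (intro nn_integral_multc) auto
  finally show ?thesis .
qed

lemma has_bochner_integral_chan_law_product:
  assumes l1: "l1 > 0" and l2: "l2 > 0"
    and [measurable]: "f \<in> borel_measurable borel" "g \<in> borel_measurable borel"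
    and f: "\<And>x. f x \<ge> 0" "(\<integral>\<^sup>+x. ennreal (f x) \<partial>exp_law l1) = ennreal a" "a \<ge> 0"
    and g: "\<And>x. g x \<ge> 0" "(\<integral>\<^sup>+x. ennreal (g x) \<partial>exp_law l2) = ennreal b" "b \<ge> 0"
  shows "has_bochner_integral (chan_law l1 l2) (\<lambda>z. f (fst z) * g (snd z)) (a * b)"
proof (rule has_bochner_integral_nn_integral)
  show "(\<lambda>z. f (fst z) * g (snd z)) \<in> borel_measurable (chan_law l1 l2)"
    by (intro measurable_chan_law) measurable
  have "(\<integral>\<^sup>+z. ennreal (f (fst z) * g (snd z)) \<partial>chan_law l1 l2) =
      (\<integral>\<^sup>+z. ennreal (f (fst z)) * ennreal (g (snd z)) \<partial>chan_law l1 l2)"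
    using f g by (simp add: ennreal_mult)
  also have "\<dots> = ennreal (a * b)"
    using nn_integral_chan_law_product[OF l1 l2, of "\<lambda>x. ennreal (f x)" "\<lambda>y. ennreal (g y)"] f g
    by (simp add: ennreal_mult)
  finally show "(\<integral>\<^sup>+z. ennreal (f (fst z) * g (snd z)) \<partial>chan_law l1 l2) = ennreal (a * b)" .
qed (use f g in auto)

lemma measurable_rates_q [measurable]:
  assumes [measurable]: "f \<in> borel_measurable M" "g \<in> borel_measurable M"
  shows "(\<lambda>x. fst (rates_q P T \<Delta> (f x) (g x))) \<in> borel_measurable M"
    and "(\<lambda>x. snd (rates_q P T \<Delta> (f x) (g x))) \<in> borel_measurable M"
proof -
  have [measurable]: "(\<lambda>x. q_r T \<Delta> x) \<in> borel_measurable borel"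
    unfolding q_r_def by measurable
  have [measurable]: "(\<lambda>x. Afrac P (u x) (v x)) \<in> borel_measurable M"
    if [measurable]: "u \<in> borel_measurable M" "v \<in> borel_measurable M" for u v
    unfolding Afrac_def by measurable
  have "(\<lambda>x. rates_q P T \<Delta> (f x) (g x)) \<in> borel_measurable M"
    unfolding rates_q_def Let_def by measurable
  then show "(\<lambda>x. fst (rates_q P T \<Delta> (f x) (g x))) \<in> borel_measurable M"
    and "(\<lambda>x. snd (rates_q P T \<Delta> (f x) (g x))) \<in> borel_measurable M"
    by (rule measurable_compose, intro borel_measurable_continuous_onI continuous_intros)+
qed

lemma measurable_r_loss:
  "(\<lambda>(h1, h2). r_loss P T \<Delta> h1 h2) \<in> borel_measurable (borel \<Otimes>\<^sub>M borel)"
  unfolding r_loss_def r_max_def Afrac_def case_prod_beta by measurable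

subsection \<open>The expected rate loss\<close>

lemma has_bochner_integral_loss_majorant:
  fixes T :: nat
  assumes l1: "l1 > 0" and l2: "l2 > 0" and \<Delta>: "\<Delta> > 0"
  defines "t \<equiv> real T * \<Delta>"
  shows "has_bochner_integral (chan_law l1 l2) (\<lambda>z. loss_majorant T \<Delta> (fst z) (snd z))
    (2 * \<Delta> + exp (- t / l1) * l2 + l1 * exp (- t / l2))"
proof -
  interpret prob_space "chan_law l1 l2" using prob_space_chan_law[OF l1 l2] .
  have t: "t \<ge> 0" using \<Delta> by (simp add: t_def)
  have "has_bochner_integral (chan_law l1 l2) (\<lambda>z. 2 * \<Delta>) (2 * \<Delta>)"
    using has_bochner_integral_integrable[OF integrable_const[of "2 * \<Delta>"]] by (simp add: prob_space)
  moreover have "has_bochner_integral (chan_law l1 l2)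
      (\<lambda>z. indicator {t<..} (fst z) * \<bar>snd z\<bar>) (exp (- t / l1) * l2)"
    using l1 l2 t nn_integral_exp_law_abs[OF l2] emeasure_exp_law_greaterThan[OF l1 t]
    by (intro has_bochner_integral_chan_law_product) (auto simp: ennreal_indicator)
  moreover have "has_bochner_integral (chan_law l1 l2)
      (\<lambda>z. \<bar>fst z\<bar> * indicator {t<..} (snd z)) (l1 * exp (- t / l2))"
    using l1 l2 t nn_integral_exp_law_abs[OF l1] emeasure_exp_law_greaterThan[OF l2 t]
    by (intro has_bochner_integral_chan_law_product) (auto simp: ennreal_indicator)
  ultimately show ?thesis
    unfolding loss_majorant_def t_def[symmetric] by (intro has_bochner_integral_add)
qed

lemma expected_r_loss_le:
  fixes T :: nat
  assumes l1: "l1 > 0" and l2: "l2 > 0" and P: "P > 0" and \<Delta>: "\<Delta> > 0"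
  defines "t \<equiv> real T * \<Delta>"
  shows "integrable (chan_law l1 l2) (\<lambda>(h1, h2). r_loss P T \<Delta> h1 h2)"
    and "(\<integral>(h1, h2). r_loss P T \<Delta> h1 h2 \<partial>chan_law l1 l2)
      \<le> log 2 (1 + P * (2 * \<Delta> + exp (- t / l1) * l2 + l1 * exp (- t / l2)))"
proof -
  let ?M = "chan_law l1 l2"
  interpret prob_space ?M using prob_space_chan_law[OF l1 l2] .
  define f where "f = (\<lambda>(h1, h2). r_loss P T \<Delta> h1 h2)"
  define g where "g = (\<lambda>z. P * loss_majorant T \<Delta> (fst z) (snd z))"
  have bounds: "AE z in ?M. \<bar>f z\<bar> \<le> P * (\<bar>fst z\<bar> + \<bar>snd z\<bar>) / ln 2 \<and>
      0 \<le> g z \<and> f z \<le> log 2 (1 + g z)"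
    using AE_chan_law_pos[OF l1 l2] by eventually_elim
      (use r_loss_bounds[OF P \<Delta>] P \<Delta> in \<open>auto simp: f_def g_def case_prod_beta loss_majorant_def\<close>)
  have "has_bochner_integral ?M (\<lambda>z. \<bar>fst z\<bar> * 1) (l1 * 1)"
    using l1 l2 nn_integral_exp_law_abs[OF l1] prob_space.emeasure_space_1[OF prob_space_exp_law[OF l2]]
    by (intro has_bochner_integral_chan_law_product) auto
  moreover have "has_bochner_integral ?M (\<lambda>z. 1 * \<bar>snd z\<bar>) (1 * l2)"
    using l1 l2 nn_integral_exp_law_abs[OF l2] prob_space.emeasure_space_1[OF prob_space_exp_law[OF l1]]
    by (intro has_bochner_integral_chan_law_product) auto
  ultimately have "integrable ?M (\<lambda>z. P * (\<bar>fst z\<bar> + \<bar>snd z\<bar>) / ln 2)"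
    by (auto dest!: integrable.intros)
  then show f: "integrable ?M f"
  proof (rule Bochner_Integration.integrable_bound)
    show "f \<in> borel_measurable ?M"
      unfolding f_def by (intro measurable_chan_law measurable_r_loss)
    show "AE z in ?M. norm (f z) \<le> norm (P * (\<bar>fst z\<bar> + \<bar>snd z\<bar>) / ln 2)"
      using bounds by eventually_elim (use P in \<open>auto simp: abs_mult\<close>)
  qed
  have g: "has_bochner_integral ?M g (P * (2 * \<Delta> + exp (- t / l1) * l2 + l1 * exp (- t / l2)))"
    unfolding g_def t_def
    by (intro has_bochner_integral_mult_right has_bochner_integral_loss_majorant l1 l2 \<Delta>)
  have "AE z in ?M. 0 \<le> g z \<and> f z \<le> log 2 (1 + g z)"
    using bounds by eventually_elim auto
  then have "integral\<^sup>L ?M f \<le> log 2 (1 + integral\<^sup>L ?M g)"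
    by (intro integral_le_log2_one_plus_integral f integrable.intros[OF g])
  then show "(\<integral>(h1, h2). r_loss P T \<Delta> h1 h2 \<partial>?M)
      \<le> log 2 (1 + P * (2 * \<Delta> + exp (- t / l1) * l2 + l1 * exp (- t / l2)))"
    using g by (simp add: f_def has_bochner_integral_integral_eq)
qed

lemma majorant_mean_le:
  fixes l1 l2 \<Delta> t :: real
  assumes "l2 \<le> l1" "l2 > 0" "\<Delta> > 0" "t \<ge> 0"
  shows "2 * \<Delta> + exp (- t / l1) * l2 + l1 * exp (- t / l2) \<le> (2 + 2 * l1) * max (exp (- t / l1)) \<Delta>"
proof -
  define e where "e = max (exp (- t / l1)) \<Delta>"
  have "t / l1 \<le> t / l2" using assms by (simp add: divide_left_mono)
  then have "exp (- t / l2) \<le> exp (- t / l1)" by simp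
  moreover have e: "exp (- t / l1) \<le> e" "\<Delta> \<le> e" by (simp_all add: e_def)
  ultimately have "exp (- t / l2) \<le> e" by linarith
  then have "l1 * exp (- t / l2) \<le> l1 * e"
    using assms by (intro mult_left_mono) auto
  moreover have "exp (- t / l1) * l2 \<le> e * l1"
    using e assms by (intro mult_mono) (auto intro: order.trans[OF exp_ge_zero])
  moreover have "(2 + 2 * l1) * e = 2 * e + e * l1 + l1 * e" by (simp add: algebra_simps)
  ultimately show ?thesis using e(2) unfolding e_def[symmetric] by linarith
qed

theorem lemma2:
  fixes l1 l2 :: real
  assumes "l1 \<ge> l2" and "l2 > 0"
  shows "\<exists>C0 > 0. \<forall>P > 0. \<forall>\<Delta> > 0. \<forall>T :: nat.
           integrable (chan_law l1 l2) (\<lambda>(h1, h2). r_loss P T \<Delta> h1 h2) \<and>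
           (\<integral>(h1, h2). r_loss P T \<Delta> h1 h2 \<partial>chan_law l1 l2)
             \<le> log 2 (1 + C0 * P * max (exp (- real T * \<Delta> / l1)) \<Delta>)"
proof (intro exI[of _ "2 + 2 * l1"] conjI allI impI)
  show "2 + 2 * l1 > 0" using assms by simp
  fix P \<Delta> :: real and T :: nat
  assume P: "P > 0" and \<Delta>: "\<Delta> > 0"
  define t where "t = real T * \<Delta>"
  define m where "m = 2 * \<Delta> + exp (- t / l1) * l2 + l1 * exp (- t / l2)"
  have "0 \<le> P * m" "P * m \<le> P * ((2 + 2 * l1) * max (exp (- t / l1)) \<Delta>)"
    using majorant_mean_le[OF assms \<Delta>, of t] assms P \<Delta>
    by (auto simp: m_def t_def intro: mult_left_mono)
  then have "log 2 (1 + P * m) \<le> log 2 (1 + P * ((2 + 2 * l1) * max (exp (- t / l1)) \<Delta>))"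
    by simp
  also have "\<dots> = log 2 (1 + (2 + 2 * l1) * P * max (exp (- t / l1)) \<Delta>)"
    by (simp add: mult_ac)
  finally show "integrable (chan_law l1 l2) (\<lambda>(h1, h2). r_loss P T \<Delta> h1 h2)"
    and "(\<integral>(h1, h2). r_loss P T \<Delta> h1 h2 \<partial>chan_law l1 l2)
      \<le> log 2 (1 + (2 + 2 * l1) * P * max (exp (- real T * \<Delta> / l1)) \<Delta>)"
    using expected_r_loss_le[OF _ assms(2) P \<Delta>, of l1 T] assms by (auto simp: t_def m_def)
qed

end
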